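(* Let $n\ge 1$ and consider the discrete-time system $$x(k+1)=A_0x(k)+B_0u(k)+E_0f(k),\qquad y(k)=C_0x(k),$$ with $A_0\in\mathbb{R}^{n\times n}$, $B_0,E_0\in\mathbb{R}^{n\times1}$, $C_0\in\mathbb{R}^{1\times n}$, known scalar input $u$, unknown scalar disturbance $f$ and scalar output $y$. Let $X(k)=[x(k)^T,f(k)]^T$, $A=\begin{bmatrix}A_0&E_0\\0_{1\times n}&1\end{bmatrix}$, $B=\begin{bmatrix}B_0\\0\end{bmatrix}$, $C=[C_0,\ 0]$, and for a gain $L\in\mathbb{R}^{n+1}$ consider the observer $$\hat X(k+1)=A\hat X(k)+Bu(k)+L\big(y(k)-C\hat X(k)\big),$$ where $\hat X(k)=[\hat x(k)^T,\hat f(k)]^T$. Then the property $$\hat f(k)=f(k-n-1)\quad\text{for all }k>n+1$$ (for all input sequences $u$, disturbance sequences $f$, and initial conditions $x(0)$, $\hat X(0)$) holds if and only if (a) $(A_0,C_0)$ is observable and $(A_0,E_0,C_0)$ has no invariant zeros, i.e. $\operatorname{rank}\begin{bmatrix} A_0-zI_n & E_0\\ C_0 & 0\end{bmatrix}=n+1$ for all $z\in\mathbb{C}$, and (b) all eigenvalues of $A-LC$ are equal to $0$.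
   Context: The observer is called the general model-based extended state observer (GMB-ESO); the last component $\hat f$ of $\hat X$ is the estimate of the total disturbance $f$. The eigenvalues of $A-LC$ are called the observer eigenvalues. *)

theory Defs
  imports "Jordan_Normal_Form.DL_Rank" "Jordan_Normal_Form.Char_Poly"
begin

definition obs_mat :: "nat \<Rightarrow> real mat \<Rightarrow> real mat \<Rightarrow> real mat" where
  "obs_mat n A0 C0 = mat n n (\<lambda>(i,j). (C0 * A0 ^\<^sub>m i) $$ (0, j))"

definition observable :: "nat \<Rightarrow> real mat \<Rightarrow> real mat \<Rightarrow> bool" where
  "observable n A0 C0 \<longleftrightarrow> vec_space.rank n (obs_mat n A0 C0) = n"

definition rosenbrock :: "nat \<Rightarrow> real mat \<Rightarrow> real mat \<Rightarrow> real mat \<Rightarrow> complex \<Rightarrow> complex mat" where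
  "rosenbrock n A0 E0 C0 z =
     four_block_mat (map_mat complex_of_real A0 - z \<cdot>\<^sub>m 1\<^sub>m n) (map_mat complex_of_real E0)
                    (map_mat complex_of_real C0) (0\<^sub>m 1 1)"

definition no_invariant_zeros :: "nat \<Rightarrow> real mat \<Rightarrow> real mat \<Rightarrow> real mat \<Rightarrow> bool" where
  "no_invariant_zeros n A0 E0 C0 \<longleftrightarrow>
     (\<forall>z::complex. vec_space.rank (n+1) (rosenbrock n A0 E0 C0 z) = n + 1)"

definition ext_A :: "nat \<Rightarrow> real mat \<Rightarrow> real mat \<Rightarrow> real mat" where
  "ext_A n A0 E0 = four_block_mat A0 E0 (0\<^sub>m 1 n) (1\<^sub>m 1)"

definition ext_B :: "nat \<Rightarrow> real mat \<Rightarrow> real mat" where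
  "ext_B n B0 = mat (n+1) 1 (\<lambda>(i,j). if i < n then B0 $$ (i,j) else 0)"

definition ext_C :: "nat \<Rightarrow> real mat \<Rightarrow> real mat" where
  "ext_C n C0 = mat 1 (n+1) (\<lambda>(i,j). if j < n then C0 $$ (i,j) else 0)"

definition delayed_exact_estimation ::
  "nat \<Rightarrow> real mat \<Rightarrow> real mat \<Rightarrow> real mat \<Rightarrow> real mat \<Rightarrow> real mat \<Rightarrow> bool" where
  "delayed_exact_estimation n A0 B0 E0 C0 L \<longleftrightarrow>
     (\<forall>(u::nat \<Rightarrow> real) (f::nat \<Rightarrow> real) (x::nat \<Rightarrow> real vec) (Xh::nat \<Rightarrow> real vec).
        x 0 \<in> carrier_vec n \<longrightarrow> Xh 0 \<in> carrier_vec (n+1) \<longrightarrow>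
        (\<forall>k. x (Suc k) = A0 *\<^sub>v x k + u k \<cdot>\<^sub>v col B0 0 + f k \<cdot>\<^sub>v col E0 0) \<longrightarrow>
        (\<forall>k. Xh (Suc k) = ext_A n A0 E0 *\<^sub>v Xh k + u k \<cdot>\<^sub>v col (ext_B n B0) 0
               + ((C0 *\<^sub>v x k) $ 0 - (ext_C n C0 *\<^sub>v Xh k) $ 0) \<cdot>\<^sub>v col L 0) \<longrightarrow>
        (\<forall>k > n + 1. Xh k $ n = f (k - n - 1)))"

end

theory Submission
  imports Defs "Jordan_Normal_Form.Schur_Decomposition"
begin

(* The estimation error e = X - Xhat obeys e(k+1) = M e(k) + (f(k+1) - f(k)) e_n with M = A - L C,
   so fhat(k) = f(k) - e_n^T M^k e(0) - sum_{j<k} (f(j+1) - f(j)) e_n^T M^(k-1-j) e_n.  Hence the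
   delay property holds for all data iff the Markov parameters e_n^T M^k e_n are 1 for k <= n and 0
   afterwards ("exact delay").  Then the product of the observability matrix of (M, e_n^T) with the
   column-reversed controllability matrix of (M, e_n) is unit upper triangular, so both matrices
   are invertible; this yields e_n^T M^(n+1) = 0, that M has only the eigenvalue 0, that (A0, C0) is
   observable and that the Rosenbrock matrix is never singular.  Conversely, if M is nilpotent and
   there are no invariant zeros, then g_k = C M^k e_n vanishes for k < n: otherwise
   sum_k g_k z^(n-k) has a root z and sum_k z^(n-k) M^k e_n is a nonzero kernel vector of the
   Rosenbrock matrix at z.  Since e_n^T M^(k+1) e_n = e_n^T M^k e_n - L_n g_k, exact delay
   follows. *)

lemma pow_mat_add:
  assumes "A \<in> carrier_mat m m"
  shows "A ^\<^sub>m (a + b) = A ^\<^sub>m a * A ^\<^sub>m b"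
proof (induction b)
  case (Suc b)
  have "A ^\<^sub>m (a + Suc b) = (A ^\<^sub>m a * A ^\<^sub>m b) * A"
    using Suc by simp
  also have "\<dots> = A ^\<^sub>m a * (A ^\<^sub>m b * A)"
    using assms by (intro assoc_mult_mat[of _ m m _ m _ m]) auto
  finally show ?case by simp
qed (use assms in simp)

lemma pow_mat_Suc_left:
  assumes "A \<in> carrier_mat m m"
  shows "A ^\<^sub>m Suc k = A * A ^\<^sub>m k"
  using pow_mat_add[OF assms, of 1 k] assms by simp

lemma pow_mat_eq_zero_ge:
  assumes A: "A \<in> carrier_mat m m" and "A ^\<^sub>m p = 0\<^sub>m m m" and "p \<le> k"
  shows "A ^\<^sub>m k = 0\<^sub>m m m"
proof -
  obtain b where "k = p + b"
    using le_Suc_ex[OF \<open>p \<le> k\<close>] by blast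
  then show ?thesis
    using assms by (simp add: pow_mat_add[OF A])
qed

lemma full_rank_iff_trivial_kernel:
  fixes A :: "'a::field mat"
  assumes "A \<in> carrier_mat m m"
  shows "vec_space.rank m A = m \<longleftrightarrow> (\<forall>v \<in> carrier_vec m. A *\<^sub>v v = 0\<^sub>v m \<longrightarrow> v = 0\<^sub>v m)"
  using vec_space.det_rank_iff[OF assms] det_0_iff_vec_prod_zero_field[OF assms] by blast

lemma det_nonzero_if_mult_unit_upper_triangular:
  fixes P Q :: "'a::field mat"
  assumes P: "P \<in> carrier_mat m m" and Q: "Q \<in> carrier_mat m m"
    and "upper_triangular (P * Q)" and "\<And>i. i < m \<Longrightarrow> (P * Q) $$ (i,i) = 1"
  shows "det P \<noteq> 0" "det Q \<noteq> 0"
proof -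
  have "det P * det Q = det (P * Q)"
    using det_mult[OF P Q] by simp
  also have "\<dots> = (\<Prod>i = 0..<m. (P * Q) $$ (i,i))"
    unfolding det_upper_triangular[OF assms(3) mult_carrier_mat[OF P Q]] prod_list_diag_prod
    using P by simp
  also have "\<dots> = 1"
    using assms(4) by simp
  finally have "det P * det Q = 1" .
  then show "det P \<noteq> 0" "det Q \<noteq> 0" by auto
qed

lemma upper_triangular_pow_eq_zero:
  fixes T :: "'a::comm_ring_1 mat"
  assumes T: "T \<in> carrier_mat m m" and "upper_triangular T" and "\<And>i. i < m \<Longrightarrow> T $$ (i,i) = 0"
  shows "T ^\<^sub>m m = 0\<^sub>m m m"
proof -
  have T_lower: "T $$ (l,j) = 0" if "l < m" "j \<le> l" for l j
    using assms that by (cases "j = l") auto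
  have "(T ^\<^sub>m k) $$ (i,j) = 0" if "i < m" "j < m" "j < i + k" for k i j
    using that
  proof (induction k arbitrary: j)
    case (Suc k)
    have "(T ^\<^sub>m Suc k) $$ (i,j) = (\<Sum>l = 0..<m. (T ^\<^sub>m k) $$ (i,l) * T $$ (l,j))"
      using Suc.prems T by (simp add: scalar_prod_def)
    also have "\<dots> = 0"
    proof (intro sum.neutral ballI)
      fix l assume "l \<in> {0..<m}"
      then show "(T ^\<^sub>m k) $$ (i,l) * T $$ (l,j) = 0"
        using Suc.IH[of l] Suc.prems T_lower[of l j] by (cases "l < i + k") auto
    qed
    finally show ?case .
  qed (use T in simp)
  then show ?thesis
    using T by (intro eq_matI) auto
qed

lemma pow_eq_zero_if_eigenvalues_zero:
  fixes B :: "complex mat"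
  assumes B: "B \<in> carrier_mat m m" and eig: "\<And>e. eigenvalue B e \<Longrightarrow> e = 0"
  shows "B ^\<^sub>m m = 0\<^sub>m m m"
proof -
  obtain es where es: "char_poly B = (\<Prod>e\<leftarrow>es. [:- e, 1:])" "length es = m"
    using char_poly_factorized[OF B] by auto
  have es_zero: "e = 0" if "e \<in> set es" for e
  proof -
    have "poly (char_poly B) e = prod_list (map (\<lambda>e'. poly [:- e', 1:] e) es)"
      unfolding es(1) poly_prod_list by (simp add: comp_def)
    also have "\<dots> = 0"
      unfolding prod_list_zero_iff using that by simp
    finally have "poly (char_poly B) e = 0" .
    then show ?thesis
      using eig eigenvalue_root_char_poly[OF B] by blast
  qed
  obtain T P Q where "schur_decomposition B es = (T,P,Q)"
    by (cases "schur_decomposition B es") auto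
  from schur_decomposition[OF B es(1) this]
  have sim: "similar_mat_wit B T P Q" and "upper_triangular T" "diag_mat T = es"
    by auto
  note sim_facts = similar_mat_witD2[OF B sim]
  then have T: "T \<in> carrier_mat m m"
    by simp
  have "T $$ (i,i) = 0" if "i < m" for i
  proof -
    have "T $$ (i,i) = es ! i"
      using that T \<open>diag_mat T = es\<close>[symmetric] unfolding diag_mat_def by simp
    then show ?thesis
      using es_zero es(2) that by simp
  qed
  then have "T ^\<^sub>m m = 0\<^sub>m m m"
    using upper_triangular_pow_eq_zero[OF T \<open>upper_triangular T\<close>] by blast
  then show ?thesis
    using similar_mat_wit_pow_id[OF sim, of m] sim_facts by simp
qed

lemma linear_recurrence_closed_form:
  fixes M :: "'a::field mat"
  assumes M: "M \<in> carrier_mat m m" and w: "w \<in> carrier_vec m" and e0: "e 0 \<in> carrier_vec m"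
    and step: "\<And>k. e (Suc k) = M *\<^sub>v e k + d k \<cdot>\<^sub>v w"
    and i: "i < m"
  shows "e k $ i = (M ^\<^sub>m k *\<^sub>v e 0) $ i + (\<Sum>j<k. d j * (M ^\<^sub>m (k - 1 - j) *\<^sub>v w) $ i)"
  using e0 step
proof (induction k arbitrary: e d)
  case 0
  then show ?case using M i by simp
next
  case (Suc k)
  have e1: "e 1 = M *\<^sub>v e 0 + d 0 \<cdot>\<^sub>v w"
    using Suc.prems(2)[of 0] by simp
  have "e (Suc k) $ i = (M ^\<^sub>m k *\<^sub>v e 1) $ i + (\<Sum>j<k. d (Suc j) * (M ^\<^sub>m (k - 1 - j) *\<^sub>v w) $ i)"
    using Suc.IH[of "e \<circ> Suc" "d \<circ> Suc"] Suc.prems M w by simp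
  also have "M ^\<^sub>m k *\<^sub>v e 1 = M ^\<^sub>m Suc k *\<^sub>v e 0 + d 0 \<cdot>\<^sub>v (M ^\<^sub>m k *\<^sub>v w)"
    unfolding e1 using M w Suc.prems(1)
    by (simp add: mult_add_distrib_mat_vec[of _ m m] mult_mat_vec[OF pow_carrier_mat[OF M] w]
        assoc_mult_mat_vec[of _ m m _ m])
  finally show ?case
    unfolding sum.lessThan_Suc_shift using M w i Suc.prems(1) by simp
qed

lemma sum_pow_shift_telescope:
  fixes a :: "nat \<Rightarrow> 'a::comm_ring_1"
  shows "(\<Sum>k\<le>p. z ^ (p - k) * a (Suc k))
         = z * (\<Sum>k\<le>p. z ^ (p - k) * a k) - z ^ Suc p * a 0 + a (Suc p)"
proof (induction p)
  case (Suc p)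
  have horner: "(\<Sum>k\<le>Suc p. z ^ (Suc p - k) * b k) = z * (\<Sum>k\<le>p. z ^ (p - k) * b k) + b (Suc p)"
    for b :: "nat \<Rightarrow> 'a"
    by (simp add: sum_distrib_left) (intro sum.cong, auto simp: Suc_diff_le)
  show ?case
    unfolding horner[of "\<lambda>k. a (Suc k)"] horner[of a] Suc.IH by (simp add: algebra_simps)
qed simp

lemma row_scalar_prod_pow_sum:
  fixes B N :: "'a::comm_ring_1 mat"
  assumes B: "B \<in> carrier_mat r m" and N: "N \<in> carrier_mat m m" and "i < r" and "j < m"
  shows "row B i \<bullet> vec m (\<lambda>l. \<Sum>k\<le>p. c k * (N ^\<^sub>m k) $$ (l,j))
         = (\<Sum>k\<le>p. c k * (B * N ^\<^sub>m k) $$ (i,j))"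
proof -
  have "row B i \<bullet> vec m (\<lambda>l. \<Sum>k\<le>p. c k * (N ^\<^sub>m k) $$ (l,j))
      = (\<Sum>l<m. \<Sum>k\<le>p. B $$ (i,l) * (c k * (N ^\<^sub>m k) $$ (l,j)))"
    using assms by (simp add: scalar_prod_def sum_distrib_left atLeast0LessThan)
  also have "\<dots> = (\<Sum>k\<le>p. c k * (\<Sum>l<m. B $$ (i,l) * (N ^\<^sub>m k) $$ (l,j)))"
    by (subst sum.swap) (simp add: sum_distrib_left ac_simps)
  also have "\<dots> = (\<Sum>k\<le>p. c k * (B * N ^\<^sub>m k) $$ (i,j))"
    using assms by (simp add: scalar_prod_def atLeast0LessThan)
  finally show ?thesis .
qed

lemma exists_orthogonal_nonzero:
  fixes vs :: "nat \<Rightarrow> 'a::field vec"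
  assumes vs: "\<And>j. j < m \<Longrightarrow> vs j \<in> carrier_vec m" and "j0 < m" and "vs j0 = 0\<^sub>v m"
  shows "\<exists>y \<in> carrier_vec m. y \<noteq> 0\<^sub>v m \<and> (\<forall>j<m. vs j \<bullet> y = 0)"
proof -
  define K where "K = mat m m (\<lambda>(i,j). vs j $ i)"
  have K: "K \<in> carrier_mat m m"
    by (simp add: K_def)
  have col_K: "col K j = vs j" if "j < m" for j
    using vs[OF that] that by (intro eq_vecI) (auto simp: K_def)
  have "K *\<^sub>v unit_vec m j0 = 0\<^sub>v m"
    using \<open>j0 < m\<close> by (intro eq_vecI) (auto simp: K_def \<open>vs j0 = 0\<^sub>v m\<close>)
  then have "det K = 0"
    using det_0_iff_vec_prod_zero_field[OF K] \<open>j0 < m\<close> unit_vec_nonzero[of m j0] by force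
  then have "det (transpose_mat K) = 0"
    using det_transpose[OF K] by simp
  then obtain y where y: "y \<in> carrier_vec m" "y \<noteq> 0\<^sub>v m" "transpose_mat K *\<^sub>v y = 0\<^sub>v m"
    using det_0_iff_vec_prod_zero_field[OF transpose_carrier_mat[THEN iffD2, OF K]] by blast
  have "vs j \<bullet> y = 0" if "j < m" for j
    using arg_cong[OF y(3), of "\<lambda>v. v $ j"] that K col_K[OF that] by simp
  then show ?thesis
    using y by blast
qed

lemma nilpotent_left_null_vector:
  fixes N :: "'a::field mat"
  assumes N: "N \<in> carrier_mat m m" and nil: "N ^\<^sub>m p = 0\<^sub>m m m"
    and y: "y \<in> carrier_vec m" "y \<noteq> 0\<^sub>v m"
  shows "\<exists>k<p. transpose_mat (N ^\<^sub>m k) *\<^sub>v y \<noteq> 0\<^sub>v m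
               \<and> transpose_mat N *\<^sub>v (transpose_mat (N ^\<^sub>m k) *\<^sub>v y) = 0\<^sub>v m"
proof -
  define Y where "Y k = transpose_mat (N ^\<^sub>m k) *\<^sub>v y" for k
  have Y_Suc: "Y (Suc k) = transpose_mat N *\<^sub>v Y k" for k
    using N y by (simp add: Y_def transpose_mult[of _ m m _ m] assoc_mult_mat_vec[of _ m m _ m])
  have "Y p = 0\<^sub>v m"
    using y by (intro eq_vecI) (simp_all add: Y_def nil)
  moreover have "Y 0 \<noteq> 0\<^sub>v m"
    using y N by (simp add: Y_def)
  ultimately obtain k where "k < p" "Y k \<noteq> 0\<^sub>v m" "Y (Suc k) = 0\<^sub>v m"
    using ex_least_nat_less[of "\<lambda>k. Y k = 0\<^sub>v m" p] by auto
  then show ?thesis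
    using Y_Suc unfolding Y_def by auto
qed

section \<open>The extended-state observer and its error matrix\<close>

(* The extended matrices of Defs are restated over an arbitrary field, so that one development
   serves both the real system and its complexification. *)
locale gmb_eso =
  fixes n :: nat and A0 B0 E0 C0 L :: "'a::field mat"
  assumes A0: "A0 \<in> carrier_mat n n" and B0: "B0 \<in> carrier_mat n 1"
    and E0: "E0 \<in> carrier_mat n 1" and C0: "C0 \<in> carrier_mat 1 n"
    and L: "L \<in> carrier_mat (Suc n) 1"
begin

definition A :: "'a mat" where
  "A = four_block_mat A0 E0 (0\<^sub>m 1 n) (1\<^sub>m 1)"

definition B :: "'a mat" where
  "B = mat (Suc n) 1 (\<lambda>(i,j). if i < n then B0 $$ (i,j) else 0)"

definition C :: "'a mat" where
  "C = mat 1 (Suc n) (\<lambda>(i,j). if j < n then C0 $$ (i,j) else 0)"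

definition M :: "'a mat" where
  "M = A - L * C"

definition R :: "'a \<Rightarrow> 'a mat" where
  "R z = four_block_mat (A0 - z \<cdot>\<^sub>m 1\<^sub>m n) E0 C0 (0\<^sub>m 1 1)"

definition est_markov :: "nat \<Rightarrow> 'a" where
  "est_markov k = (M ^\<^sub>m k) $$ (n,n)"

definition out_markov :: "nat \<Rightarrow> 'a" where
  "out_markov k = (C * M ^\<^sub>m k) $$ (0,n)"

definition exact_delay :: bool where
  "exact_delay \<longleftrightarrow> (\<forall>k. est_markov k = (if k \<le> n then 1 else 0))"

definition R_injective :: bool where
  "R_injective \<longleftrightarrow> (\<forall>z. \<forall>V \<in> carrier_vec (Suc n). R z *\<^sub>v V = 0\<^sub>v (Suc n) \<longrightarrow> V = 0\<^sub>v (Suc n))"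

lemma A_carrier [simp]: "A \<in> carrier_mat (Suc n) (Suc n)"
  unfolding A_def using A0 E0 by auto

lemma B_carrier [simp]: "B \<in> carrier_mat (Suc n) 1"
  unfolding B_def by simp

lemma C_carrier [simp]: "C \<in> carrier_mat 1 (Suc n)"
  unfolding C_def by simp

lemma M_carrier [simp]: "M \<in> carrier_mat (Suc n) (Suc n)"
  unfolding M_def using mult_carrier_mat[OF L C_carrier] by (intro minus_carrier_mat) simp

lemma R_carrier [simp]: "R z \<in> carrier_mat (Suc n) (Suc n)"
  unfolding R_def using A0 E0 C0 by auto

lemma dims [simp]:
  "dim_row A = Suc n" "dim_col A = Suc n" "dim_row B = Suc n" "dim_col B = 1"
  "dim_row C = 1" "dim_col C = Suc n" "dim_row M = Suc n" "dim_col M = Suc n"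
  "dim_row (R z) = Suc n" "dim_col (R z) = Suc n"
  using A_carrier B_carrier C_carrier M_carrier R_carrier unfolding carrier_mat_def by auto

lemma pow_M_dims [simp]: "dim_row (M ^\<^sub>m k) = Suc n" "dim_col (M ^\<^sub>m k) = Suc n"
  using pow_carrier_mat[OF M_carrier] by auto

lemma row_A_last: "row A n = unit_vec (Suc n) n"
  by (rule eq_vecI) (auto simp: A_def carrier_matD[OF A0] carrier_matD[OF E0])

lemma A_index:
  assumes "i < Suc n" and "j < Suc n"
  shows "A $$ (i,j)
         = (if i < n then if j < n then A0 $$ (i,j) else E0 $$ (i,0) else if j < n then 0 else 1)"
  using assms by (simp add: A_def carrier_matD[OF A0] carrier_matD[OF E0])

lemma M_index:
  assumes "i < Suc n" and "j < Suc n"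
  shows "M $$ (i,j) = A $$ (i,j) - L $$ (i,0) * C $$ (0,j)"
  using assms carrier_matD[OF L] by (simp add: M_def scalar_prod_def)

lemma A_mult_append:
  assumes "v \<in> carrier_vec n"
  shows "A *\<^sub>v (v @\<^sub>v vec 1 (\<lambda>_. a)) = (A0 *\<^sub>v v + a \<cdot>\<^sub>v col E0 0) @\<^sub>v vec 1 (\<lambda>_. a)"
proof -
  have "E0 *\<^sub>v vec 1 (\<lambda>_. a) = a \<cdot>\<^sub>v col E0 0"
    by (rule eq_vecI) (use E0 in \<open>auto simp: scalar_prod_def\<close>)
  moreover have "0\<^sub>m 1 n *\<^sub>v v = 0\<^sub>v 1"
    by (rule eq_vecI) (use assms in auto)
  ultimately show ?thesis
    unfolding A_def
    using four_block_mat_mult_vec[OF A0 E0 _ one_carrier_mat assms, of "0\<^sub>m 1 n"] assms by simp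
qed

lemma C_mult_append:
  assumes "v \<in> carrier_vec n" and "w \<in> carrier_vec 1"
  shows "(C *\<^sub>v (v @\<^sub>v w)) $ 0 = (C0 *\<^sub>v v) $ 0"
proof -
  have "row C 0 = row C0 0 @\<^sub>v 0\<^sub>v 1"
    by (rule eq_vecI) (use C0 in \<open>auto simp: C_def\<close>)
  moreover have "(row C0 0 @\<^sub>v 0\<^sub>v 1) \<bullet> (v @\<^sub>v w) = row C0 0 \<bullet> v + 0\<^sub>v 1 \<bullet> w"
    by (rule scalar_prod_append) (use assms C0 in auto)
  ultimately show ?thesis
    using assms C0 by simp
qed

lemma M_mult_vec:
  assumes "V \<in> carrier_vec (Suc n)"
  shows "M *\<^sub>v V = A *\<^sub>v V - (C *\<^sub>v V) $ 0 \<cdot>\<^sub>v col L 0"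
proof -
  have "L *\<^sub>v (C *\<^sub>v V) = (C *\<^sub>v V) $ 0 \<cdot>\<^sub>v col L 0"
    by (rule eq_vecI) (use L in \<open>auto simp: scalar_prod_def\<close>)
  then show ?thesis
    unfolding M_def
    using minus_mult_distrib_mat_vec[OF A_carrier mult_carrier_mat[OF L C_carrier] assms]
      assoc_mult_mat_vec[OF L C_carrier assms]
    by simp
qed

lemma M_mult_vec_last:
  assumes "V \<in> carrier_vec (Suc n)"
  shows "(M *\<^sub>v V) $ n = V $ n - (C *\<^sub>v V) $ 0 * L $$ (n,0)"
  using assms carrier_matD[OF L] by (simp add: M_mult_vec row_A_last)

lemma M_mult_append_zero:
  assumes w: "w \<in> carrier_vec n" and "(C0 *\<^sub>v w) $ 0 = 0"
  shows "M *\<^sub>v (w @\<^sub>v vec 1 (\<lambda>_. 0)) = (A0 *\<^sub>v w) @\<^sub>v vec 1 (\<lambda>_. 0)"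
proof -
  have w0: "w @\<^sub>v vec 1 (\<lambda>_. 0) \<in> carrier_vec (Suc n)"
    using append_carrier_vec[OF w vec_carrier[of 1 "\<lambda>_. 0"]] by simp
  have "0 \<cdot>\<^sub>v col L 0 = 0\<^sub>v (Suc n)"
    by (rule eq_vecI) (use carrier_matD[OF L] in auto)
  moreover have "0 \<cdot>\<^sub>v col E0 0 = 0\<^sub>v n"
    by (rule eq_vecI) (use carrier_matD[OF E0] in auto)
  ultimately show ?thesis
    unfolding M_mult_vec[OF w0] C_mult_append[OF w vec_carrier] A_mult_append[OF w] assms(2)
    using mult_mat_vec_carrier[OF A0 w]
      append_carrier_vec[OF mult_mat_vec_carrier[OF A0 w] vec_carrier[of 1 "\<lambda>_. 0"]]
    by simp
qed

lemma row_R_less: "i < n \<Longrightarrow> row (R z) i = row A i - z \<cdot>\<^sub>v unit_vec (Suc n) i"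
  by (rule eq_vecI)
    (auto simp: R_def A_def carrier_matD[OF A0] carrier_matD[OF E0] carrier_matD[OF C0])

lemma row_R_last: "row (R z) n = row C 0"
  by (rule eq_vecI)
    (auto simp: R_def C_def carrier_matD[OF A0] carrier_matD[OF E0] carrier_matD[OF C0])

lemma R_kernel_iff:
  assumes V: "V \<in> carrier_vec (Suc n)"
  shows "R z *\<^sub>v V = 0\<^sub>v (Suc n) \<longleftrightarrow> (C *\<^sub>v V) $ 0 = 0 \<and> (\<forall>i<n. (M *\<^sub>v V) $ i = z * V $ i)"
proof -
  have R_i: "(R z *\<^sub>v V) $ i = (A *\<^sub>v V) $ i - z * V $ i" if "i < n" for i
  proof -
    have rA: "row A i \<in> carrier_vec (Suc n)"
      by (simp add: carrier_vecI)
    show ?thesis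
      using that V row_R_less[OF that, of z]
        minus_scalar_prod_distrib[OF rA smult_carrier_vec[THEN iffD2, OF unit_vec_carrier] V]
        smult_scalar_prod_distrib[OF unit_vec_carrier V]
      by simp
  qed
  have R_n: "(R z *\<^sub>v V) $ n = (C *\<^sub>v V) $ 0"
    using V by (simp add: row_R_last)
  have M_i: "(M *\<^sub>v V) $ i = (A *\<^sub>v V) $ i - (C *\<^sub>v V) $ 0 * L $$ (i,0)" if "i < Suc n" for i
    using that V carrier_matD[OF L] by (simp add: M_mult_vec)
  have "R z *\<^sub>v V = 0\<^sub>v (Suc n) \<longleftrightarrow> (\<forall>i<n. (R z *\<^sub>v V) $ i = 0) \<and> (R z *\<^sub>v V) $ n = 0"
    by (auto simp: vec_eq_iff less_Suc_eq)
  also have "\<dots> \<longleftrightarrow> (C *\<^sub>v V) $ 0 = 0 \<and> (\<forall>i<n. (M *\<^sub>v V) $ i = z * V $ i)"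
    using R_i R_n M_i by auto
  finally show ?thesis .
qed

lemma est_markov_0: "est_markov 0 = 1"
  by (simp add: est_markov_def)

lemma est_markov_Suc: "est_markov (Suc k) = est_markov k - out_markov k * L $$ (n,0)"
proof -
  have "est_markov (Suc k) = (M *\<^sub>v col (M ^\<^sub>m k) n) $ n"
    unfolding est_markov_def pow_mat_Suc_left[OF M_carrier] by simp
  also have "\<dots> = col (M ^\<^sub>m k) n $ n - (C *\<^sub>v col (M ^\<^sub>m k) n) $ 0 * L $$ (n,0)"
    by (rule M_mult_vec_last) (simp add: carrier_vecI)
  also have "\<dots> = est_markov k - out_markov k * L $$ (n,0)"
    by (simp add: est_markov_def out_markov_def)
  finally show ?thesis .
qed

definition trajectory :: "(nat \<Rightarrow> 'a) \<Rightarrow> (nat \<Rightarrow> 'a) \<Rightarrow> (nat \<Rightarrow> 'a vec) \<Rightarrow> (nat \<Rightarrow> 'a vec) \<Rightarrow> bool"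
  where "trajectory u f x Xh \<longleftrightarrow> x 0 \<in> carrier_vec n \<and> Xh 0 \<in> carrier_vec (Suc n) \<and>
    (\<forall>k. x (Suc k) = A0 *\<^sub>v x k + u k \<cdot>\<^sub>v col B0 0 + f k \<cdot>\<^sub>v col E0 0) \<and>
    (\<forall>k. Xh (Suc k) = A *\<^sub>v Xh k + u k \<cdot>\<^sub>v col B 0
                         + ((C0 *\<^sub>v x k) $ 0 - (C *\<^sub>v Xh k) $ 0) \<cdot>\<^sub>v col L 0)"

lemma trajectoryD:
  assumes "trajectory u f x Xh"
  shows "x 0 \<in> carrier_vec n" and "Xh 0 \<in> carrier_vec (Suc n)"
    and "x (Suc k) = A0 *\<^sub>v x k + u k \<cdot>\<^sub>v col B0 0 + f k \<cdot>\<^sub>v col E0 0"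
    and "Xh (Suc k) = A *\<^sub>v Xh k + u k \<cdot>\<^sub>v col B 0
                      + ((C0 *\<^sub>v x k) $ 0 - (C *\<^sub>v Xh k) $ 0) \<cdot>\<^sub>v col L 0"
  using assms unfolding trajectory_def by auto

lemma trajectory_carrier:
  assumes "trajectory u f x Xh"
  shows "x k \<in> carrier_vec n" and "Xh k \<in> carrier_vec (Suc n)"
proof -
  show "x k \<in> carrier_vec n"
  proof (induction k)
    case (Suc k)
    show ?case
      unfolding trajectoryD(3)[OF assms] using Suc B0 E0
      by (intro add_carrier_vec mult_mat_vec_carrier[OF A0]) auto
  qed (rule trajectoryD(1)[OF assms])
  show "Xh k \<in> carrier_vec (Suc n)"
  proof (induction k)
    case (Suc k)
    show ?case
      unfolding trajectoryD(4)[OF assms]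
      using Suc col_dim[of B 0] col_dim[of L 0] carrier_matD[OF L]
      by (intro add_carrier_vec mult_mat_vec_carrier[OF A_carrier]) auto
  qed (rule trajectoryD(2)[OF assms])
qed

lemma trajectory_error_Suc:
  assumes "trajectory u f x Xh"
  shows "(x (Suc k) @\<^sub>v vec 1 (\<lambda>_. f (Suc k))) - Xh (Suc k)
         = M *\<^sub>v ((x k @\<^sub>v vec 1 (\<lambda>_. f k)) - Xh k) + (f (Suc k) - f k) \<cdot>\<^sub>v unit_vec (Suc n) n"
proof -
  note x = trajectory_carrier(1)[OF assms] and Xh = trajectory_carrier(2)[OF assms]
  define X where "X k = x k @\<^sub>v vec 1 (\<lambda>_. f k)" for k
  have X: "X k \<in> carrier_vec (Suc n)" for k
    using append_carrier_vec[OF x[of k] vec_carrier[of 1 "\<lambda>_. f k"]] by (simp add: X_def)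
  have AX: "A *\<^sub>v X k = (A0 *\<^sub>v x k + f k \<cdot>\<^sub>v col E0 0) @\<^sub>v vec 1 (\<lambda>_. f k)"
    unfolding X_def by (rule A_mult_append[OF x])
  have X_Suc: "X (Suc k) = A *\<^sub>v X k + u k \<cdot>\<^sub>v col B 0 + (f (Suc k) - f k) \<cdot>\<^sub>v unit_vec (Suc n) n"
    unfolding AX
    by (rule eq_vecI) (use x[of k] A0 B0 E0 in \<open>auto simp: X_def B_def trajectoryD(3)[OF assms]\<close>)
  have CX: "(C *\<^sub>v (X k - Xh k)) $ 0 = (C0 *\<^sub>v x k) $ 0 - (C *\<^sub>v Xh k) $ 0"
    using C_mult_append[OF x, of "vec 1 (\<lambda>_. f k)" k] mult_minus_distrib_mat_vec[OF C_carrier X Xh]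
    by (simp add: X_def)
  have "M *\<^sub>v (X k - Xh k) = A *\<^sub>v (X k - Xh k) - (C *\<^sub>v (X k - Xh k)) $ 0 \<cdot>\<^sub>v col L 0"
    using X Xh by (intro M_mult_vec) simp
  then have "M *\<^sub>v (X k - Xh k)
      = A *\<^sub>v X k - A *\<^sub>v Xh k - ((C0 *\<^sub>v x k) $ 0 - (C *\<^sub>v Xh k) $ 0) \<cdot>\<^sub>v col L 0"
    unfolding CX using mult_minus_distrib_mat_vec[OF A_carrier X Xh] by simp
  then show ?thesis
    unfolding X_def[symmetric] X_Suc trajectoryD(4)[OF assms]
    by (intro eq_vecI) (auto simp: carrier_matD[OF L] algebra_simps)
qed

lemma trajectory_estimate:
  assumes "trajectory u f x Xh"
  shows "Xh k $ n = f k - row (M ^\<^sub>m k) n \<bullet> ((x 0 @\<^sub>v vec 1 (\<lambda>_. f 0)) - Xh 0)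
                   - (\<Sum>j<k. (f (Suc j) - f j) * est_markov (k - 1 - j))"
proof -
  note x = trajectory_carrier(1)[OF assms] and Xh = trajectory_carrier(2)[OF assms]
  define e where "e k = (x k @\<^sub>v vec 1 (\<lambda>_. f k)) - Xh k" for k
  have e0: "e 0 \<in> carrier_vec (Suc n)"
    using append_carrier_vec[OF x vec_carrier[of 1 "\<lambda>_. f 0"]] Xh by (simp add: e_def)
  have e_Suc: "e (Suc k) = M *\<^sub>v e k + (f (Suc k) - f k) \<cdot>\<^sub>v unit_vec (Suc n) n" for k
    unfolding e_def by (rule trajectory_error_Suc[OF assms])
  have "e k $ n = (M ^\<^sub>m k *\<^sub>v e 0) $ n
      + (\<Sum>j<k. (f (Suc j) - f j) * (M ^\<^sub>m (k - 1 - j) *\<^sub>v unit_vec (Suc n) n) $ n)"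
    using linear_recurrence_closed_form[where d = "\<lambda>j. f (Suc j) - f j" and i = n and k = k,
        OF M_carrier unit_vec_carrier e0 e_Suc]
    by simp
  moreover have "e k $ n = f k - Xh k $ n"
    using x[of k] Xh[of k] by (simp add: e_def)
  ultimately show ?thesis
    using e0 by (simp add: e_def est_markov_def algebra_simps)
qed

lemma step_response:
  assumes "trajectory u f x Xh" and step: "\<And>k. f k = (if Suc (Suc n) \<le> k then 1 else 0)"
    and "x 0 = 0\<^sub>v n" and "Xh 0 = 0\<^sub>v (Suc n)"
  shows "Xh (i + Suc (Suc n)) $ n = 1 - est_markov i"
proof -
  define K where "K = i + Suc (Suc n)"
  have "(x 0 @\<^sub>v vec 1 (\<lambda>_. f 0)) - Xh 0 = 0\<^sub>v (Suc n)"
    using assms(3,4) by (intro eq_vecI) (auto simp: step)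
  then have initial: "row (M ^\<^sub>m K) n \<bullet> ((x 0 @\<^sub>v vec 1 (\<lambda>_. f 0)) - Xh 0) = 0"
    by (simp add: carrier_vecI del: pow_mat.simps)
  have "(\<Sum>j<K. (f (Suc j) - f j) * est_markov (K - 1 - j))
      = (\<Sum>j<K. if j = Suc n then est_markov i else 0)"
    by (intro sum.cong) (auto simp: step K_def)
  also have "\<dots> = est_markov i"
    by (simp add: K_def del: sum.lessThan_Suc)
  finally have "Xh K $ n = 1 - est_markov i"
    using trajectory_estimate[OF assms(1), of K] initial by (simp add: step K_def)
  then show ?thesis
    by (simp add: K_def)
qed

subsection \<open>Consequences of exact delay\<close>

definition est_obs_mat :: "'a mat" where
  "est_obs_mat = mat (Suc n) (Suc n) (\<lambda>(i,j). (M ^\<^sub>m i) $$ (n,j))"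

definition est_ctrb_mat :: "'a mat" where
  "est_ctrb_mat = mat (Suc n) (Suc n) (\<lambda>(i,j). (M ^\<^sub>m (n - j)) $$ (i,n))"

lemma est_obs_mat_carrier [simp]: "est_obs_mat \<in> carrier_mat (Suc n) (Suc n)"
  and est_ctrb_mat_carrier [simp]: "est_ctrb_mat \<in> carrier_mat (Suc n) (Suc n)"
  by (simp_all add: est_obs_mat_def est_ctrb_mat_def)

lemma est_obs_ctrb_dims [simp]:
  "dim_row est_obs_mat = Suc n" "dim_col est_obs_mat = Suc n"
  "dim_row est_ctrb_mat = Suc n" "dim_col est_ctrb_mat = Suc n"
  by (simp_all add: est_obs_mat_def est_ctrb_mat_def)

lemma row_est_obs_mat: "i < Suc n \<Longrightarrow> row est_obs_mat i = row (M ^\<^sub>m i) n"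
  using pow_M_dims[of i] by (intro eq_vecI) (simp_all add: est_obs_mat_def)

lemma col_est_ctrb_mat: "j < Suc n \<Longrightarrow> col est_ctrb_mat j = col (M ^\<^sub>m (n - j)) n"
  using pow_M_dims[of "n - j"] by (intro eq_vecI) (simp_all add: est_ctrb_mat_def)

lemma est_obs_ctrb_mult_index:
  assumes "i < Suc n" and "j < Suc n"
  shows "(est_obs_mat * est_ctrb_mat) $$ (i,j) = est_markov (i + (n - j))"
proof -
  have "(est_obs_mat * est_ctrb_mat) $$ (i,j) = row (M ^\<^sub>m i) n \<bullet> col (M ^\<^sub>m (n - j)) n"
    using assms by (simp add: row_est_obs_mat col_est_ctrb_mat)
  also have "\<dots> = (M ^\<^sub>m i * M ^\<^sub>m (n - j)) $$ (n,n)"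
    by simp
  finally show ?thesis
    by (simp only: est_markov_def pow_mat_add[OF M_carrier])
qed

lemma exact_delay_det_nonzero:
  assumes exact_delay
  shows "det est_obs_mat \<noteq> 0" and "det est_ctrb_mat \<noteq> 0"
proof -
  have prod: "(est_obs_mat * est_ctrb_mat) $$ (i,j) = (if i \<le> j then 1 else 0)"
    if "i < Suc n" "j < Suc n" for i j
    using est_obs_ctrb_mult_index[OF that] assms that unfolding exact_delay_def by auto
  have "upper_triangular (est_obs_mat * est_ctrb_mat)"
    using prod by (auto simp: upper_triangular_def)
  with det_nonzero_if_mult_unit_upper_triangular[OF est_obs_mat_carrier est_ctrb_mat_carrier] prod
  show "det est_obs_mat \<noteq> 0" and "det est_ctrb_mat \<noteq> 0"
    by auto
qed

lemma exact_delay_est_unobservable_eq_zero: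
  assumes exact_delay and V: "V \<in> carrier_vec (Suc n)"
    and unobserved: "\<And>i. i \<le> n \<Longrightarrow> (M ^\<^sub>m i *\<^sub>v V) $ n = 0"
  shows "V = 0\<^sub>v (Suc n)"
proof -
  have "est_obs_mat *\<^sub>v V = 0\<^sub>v (Suc n)"
    by (rule eq_vecI) (use unobserved in \<open>auto simp: row_est_obs_mat\<close>)
  then show ?thesis
    using exact_delay_det_nonzero(1)[OF assms(1)] det_0_iff_vec_prod_zero_field[OF est_obs_mat_carrier]
      V
    by blast
qed

lemma exact_delay_last_row_pow_eq_zero:
  assumes exact_delay and "Suc n \<le> k"
  shows "row (M ^\<^sub>m k) n = 0\<^sub>v (Suc n)"
proof -
  define y where "y = row (M ^\<^sub>m Suc n) n"
  have y: "y \<in> carrier_vec (Suc n)"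
    by (simp add: y_def carrier_vecI)
  have "transpose_mat est_ctrb_mat *\<^sub>v y = 0\<^sub>v (Suc n)"
  proof (rule eq_vecI)
    fix j assume "j < dim_vec (0\<^sub>v (Suc n) :: 'a vec)"
    then have j: "j < Suc n" by simp
    have "(transpose_mat est_ctrb_mat *\<^sub>v y) $ j = y \<bullet> col (M ^\<^sub>m (n - j)) n"
      using j comm_scalar_prod[OF _ y, of "col (M ^\<^sub>m (n - j)) n"]
      by (simp add: col_est_ctrb_mat carrier_vecI)
    also have "\<dots> = est_markov (Suc n + (n - j))"
      unfolding y_def est_markov_def pow_mat_add[OF M_carrier] by simp
    also have "\<dots> = 0"
      using assms(1) unfolding exact_delay_def by simp
    finally show "(transpose_mat est_ctrb_mat *\<^sub>v y) $ j = 0\<^sub>v (Suc n) $ j"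
      using j by simp
  qed simp
  moreover have "det (transpose_mat est_ctrb_mat) \<noteq> 0"
    using exact_delay_det_nonzero(2)[OF assms(1)] det_transpose[OF est_ctrb_mat_carrier] by simp
  ultimately have y0: "y = 0\<^sub>v (Suc n)"
    using det_0_iff_vec_prod_zero_field[OF transpose_carrier_mat[THEN iffD2, OF est_ctrb_mat_carrier]]
      y by blast
  obtain b where "k = Suc n + b"
    using le_Suc_ex[OF assms(2)] by blast
  then have "row (M ^\<^sub>m k) n = row (M ^\<^sub>m Suc n * M ^\<^sub>m b) n"
    by (simp only: pow_mat_add[OF M_carrier])
  also have "\<dots> = vec (Suc n) (\<lambda>j. y \<bullet> col (M ^\<^sub>m b) j)"
    unfolding y_def by (rule row_mult) auto
  also have "\<dots> = 0\<^sub>v (Suc n)"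
    using y0 by (intro eq_vecI) (auto simp: carrier_vecI)
  finally show ?thesis .
qed

lemma exact_delay_eigenvalue_eq_zero:
  assumes exact_delay and "eigenvalue M ev"
  shows "ev = 0"
proof (rule ccontr)
  assume "ev \<noteq> 0"
  obtain V where "eigenvector M V ev"
    using assms(2) unfolding eigenvalue_def by blast
  then have V: "V \<in> carrier_vec (Suc n)" "V \<noteq> 0\<^sub>v (Suc n)"
    and pow: "\<And>i. M ^\<^sub>m i *\<^sub>v V = ev ^ i \<cdot>\<^sub>v V"
    using eigenvector_pow[OF M_carrier] unfolding eigenvector_def by auto
  have "ev ^ Suc n * V $ n = (M ^\<^sub>m Suc n *\<^sub>v V) $ n"
    using pow V by (simp del: pow_mat.simps)
  also have "\<dots> = 0"
    using exact_delay_last_row_pow_eq_zero[OF assms(1) order_refl] V by (simp del: pow_mat.simps)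
  finally have "V $ n = 0"
    using \<open>ev \<noteq> 0\<close> by simp
  then have "V = 0\<^sub>v (Suc n)"
    using V pow by (intro exact_delay_est_unobservable_eq_zero[OF assms(1) V(1)]) simp
  then show False
    using V by simp
qed

lemma exact_delay_R_kernel_trivial:
  assumes exact_delay and V: "V \<in> carrier_vec (Suc n)" and "R z *\<^sub>v V = 0\<^sub>v (Suc n)"
  shows "V = 0\<^sub>v (Suc n)"
proof -
  have CV: "(C *\<^sub>v V) $ 0 = 0" and MV_i: "\<And>i. i < n \<Longrightarrow> (M *\<^sub>v V) $ i = z * V $ i"
    using assms(3) R_kernel_iff[OF V] by auto
  have MV: "M *\<^sub>v V = z \<cdot>\<^sub>v V + ((1 - z) * V $ n) \<cdot>\<^sub>v unit_vec (Suc n) n"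
    by (rule eq_vecI)
      (use V CV MV_i M_mult_vec_last[OF V] in \<open>auto simp: less_Suc_eq algebra_simps\<close>)
  \<comment> \<open>\<open>t j\<close> stays equal to \<open>V $ n\<close> up to \<open>j = Suc n\<close>, where it vanishes\<close>
  define t where "t j = (M ^\<^sub>m j *\<^sub>v V) $ n" for j
  have t_Suc: "t (Suc j) = z * t j + (1 - z) * V $ n * est_markov j" for j
  proof -
    have "M ^\<^sub>m Suc j *\<^sub>v V
        = z \<cdot>\<^sub>v (M ^\<^sub>m j *\<^sub>v V) + ((1 - z) * V $ n) \<cdot>\<^sub>v (M ^\<^sub>m j *\<^sub>v unit_vec (Suc n) n)"
      using V by (simp add: assoc_mult_mat_vec[of _ "Suc n" "Suc n" _ "Suc n"] MV
          mult_add_distrib_mat_vec[of _ "Suc n" "Suc n"] mult_mat_vec[of _ "Suc n" "Suc n"])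
    then show ?thesis
      using V by (simp add: t_def est_markov_def)
  qed
  have "t j = V $ n" if "j \<le> Suc n" for j
    using that
  proof (induction j)
    case 0
    show ?case
      using V by (simp add: t_def)
  next
    case (Suc j)
    then show ?case
      using assms(1) by (simp add: t_Suc exact_delay_def algebra_simps)
  qed
  moreover have "t (Suc n) = 0"
    using exact_delay_last_row_pow_eq_zero[OF assms(1) order_refl] V
    by (simp add: t_def del: pow_mat.simps)
  ultimately have Vn: "V $ n = 0"
    by simp
  have "t j = 0" for j
  proof (induction j)
    case 0
    show ?case
      using V Vn by (simp add: t_def)
  qed (simp add: t_Suc Vn)
  then show ?thesis
    using exact_delay_est_unobservable_eq_zero[OF assms(1) V] by (simp add: t_def)
qed

lemma exact_delay_unobservable_eq_zero:
  assumes exact_delay and v: "v \<in> carrier_vec n"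
    and unobservable: "\<And>i. i < n \<Longrightarrow> (C0 * A0 ^\<^sub>m i *\<^sub>v v) $ 0 = 0"
  shows "v = 0\<^sub>v n"
proof -
  define V where "V = v @\<^sub>v vec 1 (\<lambda>_. 0)"
  have V: "V \<in> carrier_vec (Suc n)"
    using append_carrier_vec[OF v vec_carrier[of 1 "\<lambda>_. 0"]] by (simp add: V_def)
  have pow: "M ^\<^sub>m i *\<^sub>v V = (A0 ^\<^sub>m i *\<^sub>v v) @\<^sub>v vec 1 (\<lambda>_. 0)" if "i \<le> n" for i
    using that
  proof (induction i)
    case 0
    show ?case
      using V v by (simp add: V_def carrier_matD[OF A0])
  next
    case (Suc i)
    have w: "A0 ^\<^sub>m i *\<^sub>v v \<in> carrier_vec n"
      using mult_mat_vec_carrier[OF pow_carrier_mat[OF A0] v] .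
    have "(C0 *\<^sub>v (A0 ^\<^sub>m i *\<^sub>v v)) $ 0 = (C0 * A0 ^\<^sub>m i *\<^sub>v v) $ 0"
      by (simp only: assoc_mult_mat_vec[OF C0 pow_carrier_mat[OF A0] v])
    also have "\<dots> = 0"
      using Suc.prems unobservable by simp
    finally have "(C0 *\<^sub>v (A0 ^\<^sub>m i *\<^sub>v v)) $ 0 = 0" .
    moreover have "M ^\<^sub>m i *\<^sub>v V = (A0 ^\<^sub>m i *\<^sub>v v) @\<^sub>v vec 1 (\<lambda>_. 0)"
      using Suc by simp
    ultimately have "M *\<^sub>v (M ^\<^sub>m i *\<^sub>v V) = (A0 *\<^sub>v (A0 ^\<^sub>m i *\<^sub>v v)) @\<^sub>v vec 1 (\<lambda>_. 0)"
      using M_mult_append_zero[OF w] by simp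
    then show ?case
      by (simp only: pow_mat_Suc_left[OF M_carrier] pow_mat_Suc_left[OF A0]
          assoc_mult_mat_vec[OF M_carrier pow_carrier_mat[OF M_carrier] V]
          assoc_mult_mat_vec[OF A0 pow_carrier_mat[OF A0] v])
  qed
  have "V = 0\<^sub>v (Suc n)"
    using exact_delay_est_unobservable_eq_zero[OF assms(1) V] pow A0 v by simp
  moreover have "v $ i = V $ i" if "i < n" for i
    using v that by (simp add: V_def)
  ultimately show ?thesis
    using v by (intro eq_vecI) auto
qed

lemma estimate_delayed_if_exact_delay:
  assumes exact_delay and traj: "trajectory u f x Xh" and k: "Suc n < k"
  shows "Xh k $ n = f (k - Suc n)"
proof -
  note x0 = trajectoryD(1)[OF traj] and Xh0 = trajectoryD(2)[OF traj]
  have "(x 0 @\<^sub>v vec 1 (\<lambda>_. f 0)) - Xh 0 \<in> carrier_vec (Suc n)"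
    using append_carrier_vec[OF x0 vec_carrier[of 1 "\<lambda>_. f 0"]] Xh0 by simp
  then have initial: "row (M ^\<^sub>m k) n \<bullet> ((x 0 @\<^sub>v vec 1 (\<lambda>_. f 0)) - Xh 0) = 0"
    using exact_delay_last_row_pow_eq_zero[OF assms(1)] k by simp
  have "(\<Sum>j<k. (f (Suc j) - f j) * est_markov (k - 1 - j))
      = (\<Sum>j<k. if j \<in> {k - Suc n..<k} then f (Suc j) - f j else 0)"
    using assms(1) k unfolding exact_delay_def by (intro sum.cong) auto
  also have "\<dots> = (\<Sum>j = k - Suc n..<k. f (Suc j) - f j)"
    by (subst sum.inter_restrict[symmetric]) (simp_all add: Int_absorb1 subset_eq)
  also have "\<dots> = f k - f (k - Suc n)"
    by (rule sum_Suc_diff') simp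
  finally show ?thesis
    using trajectory_estimate[OF traj, of k] initial by simp
qed

subsection \<open>Sufficient conditions for exact delay\<close>

lemma exact_delay_if_estimates_delayed:
  assumes delayed: "\<And>u f x Xh k. trajectory u f x Xh \<Longrightarrow> Suc n < k \<Longrightarrow> Xh k $ n = f (k - Suc n)"
  shows exact_delay
  unfolding exact_delay_def
proof
  fix i
  define f :: "nat \<Rightarrow> 'a" where "f k = (if Suc (Suc n) \<le> k then 1 else 0)" for k
  define x where "x = rec_nat (0\<^sub>v n) (\<lambda>k xk. A0 *\<^sub>v xk + 0 \<cdot>\<^sub>v col B0 0 + f k \<cdot>\<^sub>v col E0 0)"
  define Xh where "Xh = rec_nat (0\<^sub>v (Suc n))
    (\<lambda>k Xk. A *\<^sub>v Xk + 0 \<cdot>\<^sub>v col B 0 + ((C0 *\<^sub>v x k) $ 0 - (C *\<^sub>v Xk) $ 0) \<cdot>\<^sub>v col L 0)"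
  have traj: "trajectory (\<lambda>_. 0) f x Xh"
    by (simp add: trajectory_def x_def Xh_def)
  have "Xh (i + Suc (Suc n)) $ n = f (Suc i)"
    using delayed[OF traj, of "i + Suc (Suc n)"] by simp
  moreover have "Xh (i + Suc (Suc n)) $ n = 1 - est_markov i"
    by (rule step_response[OF traj]) (simp_all add: f_def x_def Xh_def)
  ultimately show "est_markov i = (if i \<le> n then 1 else 0)"
    by (cases "i \<le> n") (auto simp: f_def eq_diff_eq)
qed

lemma exact_delay_if_out_markov_zero:
  assumes nil: "M ^\<^sub>m Suc n = 0\<^sub>m (Suc n) (Suc n)" and out: "\<And>k. k < n \<Longrightarrow> out_markov k = 0"
  shows exact_delay
proof -
  have "est_markov k = 1" if "k \<le> n" for k
    using that by (induction k) (simp_all add: est_markov_0 est_markov_Suc out)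
  moreover have "est_markov k = 0" if "n < k" for k
    using pow_mat_eq_zero_ge[OF M_carrier nil, of k] that by (simp add: est_markov_def)
  ultimately show ?thesis
    unfolding exact_delay_def by simp
qed

(* A left null vector of M with vanishing last entry yields one of R 0. *)
lemma transpose_R_zero_mult_vec:
  assumes Y: "Y \<in> carrier_vec (Suc n)" and "Y $ n = 0"
  defines "W \<equiv> vec (Suc n) (\<lambda>i. if i < n then Y $ i else - (col L 0 \<bullet> Y))"
  shows "transpose_mat (R 0) *\<^sub>v W = transpose_mat M *\<^sub>v Y"
proof (rule eq_vecI)
  fix l assume "l < dim_vec (transpose_mat M *\<^sub>v Y)"
  then have l: "l < Suc n" by simp
  have R0: "R 0 $$ (i,l) = (if i < n then A $$ (i,l) else C $$ (0,l))" if "i < Suc n" for i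
    using that l
    by (auto simp: R_def A_def C_def carrier_matD[OF A0] carrier_matD[OF E0] carrier_matD[OF C0])
  have "(transpose_mat (R 0) *\<^sub>v W) $ l = (\<Sum>i<n. A $$ (i,l) * Y $ i) - C $$ (0,l) * (col L 0 \<bullet> Y)"
    using l R0 by (simp add: W_def scalar_prod_def atLeast0LessThan)
  also have "\<dots> = (\<Sum>i<Suc n. A $$ (i,l) * Y $ i) - C $$ (0,l) * (\<Sum>i<Suc n. L $$ (i,0) * Y $ i)"
    using l Y \<open>Y $ n = 0\<close> carrier_matD[OF L]
    by (simp add: scalar_prod_def atLeast0LessThan sum_distrib_left ring_distribs)
  also have "\<dots> = (\<Sum>i<Suc n. A $$ (i,l) * Y $ i - C $$ (0,l) * (L $$ (i,0) * Y $ i))"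
    by (simp add: sum_subtractf sum_distrib_left del: sum.lessThan_Suc)
  also have "\<dots> = (\<Sum>i<Suc n. M $$ (i,l) * Y $ i)"
    using l by (intro sum.cong) (simp_all add: M_index algebra_simps)
  also have "\<dots> = (transpose_mat M *\<^sub>v Y) $ l"
    using l Y by (simp add: scalar_prod_def atLeast0LessThan)
  finally show "(transpose_mat (R 0) *\<^sub>v W) $ l = (transpose_mat M *\<^sub>v Y) $ l" .
qed (simp add: W_def)

lemma last_col_pow_n_nonzero:
  assumes R0: "\<And>V. V \<in> carrier_vec (Suc n) \<Longrightarrow> R 0 *\<^sub>v V = 0\<^sub>v (Suc n) \<Longrightarrow> V = 0\<^sub>v (Suc n)"
    and nil: "M ^\<^sub>m Suc n = 0\<^sub>m (Suc n) (Suc n)"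
  shows "col (M ^\<^sub>m n) n \<noteq> 0\<^sub>v (Suc n)"
proof
  assume "col (M ^\<^sub>m n) n = 0\<^sub>v (Suc n)"
  moreover have "col (M ^\<^sub>m j) n \<in> carrier_vec (Suc n)" for j
    by (simp add: carrier_vecI)
  ultimately obtain y where y: "y \<in> carrier_vec (Suc n)" "y \<noteq> 0\<^sub>v (Suc n)"
    and orth: "\<forall>j<Suc n. col (M ^\<^sub>m j) n \<bullet> y = 0"
    using exists_orthogonal_nonzero[of "Suc n" "\<lambda>j. col (M ^\<^sub>m j) n" n] by blast
  obtain k where k: "k < Suc n" and Y: "transpose_mat (M ^\<^sub>m k) *\<^sub>v y \<noteq> 0\<^sub>v (Suc n)"
    and MY: "transpose_mat M *\<^sub>v (transpose_mat (M ^\<^sub>m k) *\<^sub>v y) = 0\<^sub>v (Suc n)"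
    using nilpotent_left_null_vector[OF M_carrier nil y] by blast
  define Y where "Y = transpose_mat (M ^\<^sub>m k) *\<^sub>v y"
  have Y_carrier: "Y \<in> carrier_vec (Suc n)"
    by (simp add: Y_def carrier_vecI)
  have Yn: "Y $ n = 0"
    using orth k by (simp add: Y_def)
  define W where "W = vec (Suc n) (\<lambda>i. if i < n then Y $ i else - (col L 0 \<bullet> Y))"
  have W_carrier: "W \<in> carrier_vec (Suc n)"
    by (simp add: W_def)
  have "transpose_mat (R 0) *\<^sub>v W = 0\<^sub>v (Suc n)"
    unfolding W_def transpose_R_zero_mult_vec[OF Y_carrier Yn] using MY by (simp add: Y_def)
  moreover have "W \<noteq> 0\<^sub>v (Suc n)"
  proof
    assume W0: "W = 0\<^sub>v (Suc n)"
    have "Y $ i = 0" if "i < Suc n" for i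
      using that Yn arg_cong[OF W0, of "\<lambda>v. v $ i"]
      by (cases "i < n") (auto simp: W_def less_Suc_eq)
    then have "Y = 0\<^sub>v (Suc n)"
      using Y_carrier by (intro eq_vecI) auto
    then show False
      using Y by (simp add: Y_def)
  qed
  ultimately have "det (transpose_mat (R 0)) = 0"
    using det_0_iff_vec_prod_zero_field[OF transpose_carrier_mat[THEN iffD2, OF R_carrier]]
      W_carrier
    by blast
  then have "det (R 0) = 0"
    using det_transpose[OF R_carrier] by simp
  then show False
    using det_0_iff_vec_prod_zero_field[OF R_carrier] R0 by blast
qed

definition krylov_vec :: "'a \<Rightarrow> 'a vec" where
  "krylov_vec z = vec (Suc n) (\<lambda>l. \<Sum>k\<le>n. z ^ (n - k) * (M ^\<^sub>m k) $$ (l,n))"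

lemma krylov_vec_carrier [simp]: "krylov_vec z \<in> carrier_vec (Suc n)"
  by (simp add: krylov_vec_def)

lemma M_mult_krylov_vec:
  assumes nil: "M ^\<^sub>m Suc n = 0\<^sub>m (Suc n) (Suc n)" and i: "i < Suc n"
  shows "(M *\<^sub>v krylov_vec z) $ i = z * krylov_vec z $ i - z ^ Suc n * (1\<^sub>m (Suc n)) $$ (i,n)"
proof -
  have "(M *\<^sub>v krylov_vec z) $ i = (\<Sum>k\<le>n. z ^ (n - k) * (M * M ^\<^sub>m k) $$ (i,n))"
    using row_scalar_prod_pow_sum[OF M_carrier M_carrier i, of n "\<lambda>k. z ^ (n - k)" n] i
    by (simp add: krylov_vec_def)
  also have "\<dots> = (\<Sum>k\<le>n. z ^ (n - k) * (M ^\<^sub>m Suc k) $$ (i,n))"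
    by (simp only: pow_mat_Suc_left[OF M_carrier])
  also have "\<dots> = z * krylov_vec z $ i - z ^ Suc n * (M ^\<^sub>m 0) $$ (i,n) + (M ^\<^sub>m Suc n) $$ (i,n)"
    unfolding sum_pow_shift_telescope[of z n "\<lambda>k. (M ^\<^sub>m k) $$ (i,n)"] using i
    by (simp add: krylov_vec_def)
  finally show ?thesis
    using i by (simp add: nil del: pow_mat.simps(2))
qed

lemma C_mult_krylov_vec: "(C *\<^sub>v krylov_vec z) $ 0 = (\<Sum>k\<le>n. z ^ (n - k) * out_markov k)"
  using row_scalar_prod_pow_sum[OF C_carrier M_carrier, of 0 n "\<lambda>k. z ^ (n - k)" n]
  by (simp add: krylov_vec_def out_markov_def)

lemma krylov_vec_zero: "krylov_vec 0 = col (M ^\<^sub>m n) n"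
proof -
  have "krylov_vec 0 $ i = (M ^\<^sub>m n) $$ (i,n)" if "i < Suc n" for i
  proof -
    have "krylov_vec 0 $ i = (\<Sum>k\<le>n. 0 ^ (n - k) * (M ^\<^sub>m k) $$ (i,n))"
      using that by (simp add: krylov_vec_def)
    also have "\<dots> = (\<Sum>k\<le>n. if k = n then (M ^\<^sub>m k) $$ (i,n) else 0)"
      by (intro sum.cong) auto
    finally show ?thesis
      by simp
  qed
  then show ?thesis
    using pow_M_dims[of n] by (intro eq_vecI) simp_all
qed

lemma R_mult_krylov_vec:
  assumes "M ^\<^sub>m Suc n = 0\<^sub>m (Suc n) (Suc n)" and "(\<Sum>k\<le>n. z ^ (n - k) * out_markov k) = 0"
  shows "R z *\<^sub>v krylov_vec z = 0\<^sub>v (Suc n)"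
  using R_kernel_iff[OF krylov_vec_carrier] M_mult_krylov_vec[OF assms(1)] C_mult_krylov_vec
    assms(2)
  by simp

end

locale complex_gmb_eso = gmb_eso n A0 B0 E0 C0 L for n and A0 B0 E0 C0 L :: "complex mat"
begin

lemma out_markov_eq_zero:
  assumes R_injective and nil: "M ^\<^sub>m Suc n = 0\<^sub>m (Suc n) (Suc n)" and k0: "k0 < n"
  shows "out_markov k0 = 0"
proof (rule ccontr)
  assume nonzero: "out_markov k0 \<noteq> 0"
  define p where "p = (\<Sum>k\<le>n. monom (out_markov k) (n - k))"
  have "coeff p (n - k0) = (\<Sum>k\<le>n. if k = k0 then out_markov k else 0)"
    unfolding p_def coeff_sum coeff_monom using k0 by (intro sum.cong) auto
  then have "coeff p (n - k0) \<noteq> 0"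
    using nonzero k0 by simp
  then have "degree p \<noteq> 0"
    using le_degree[of p "n - k0"] k0 by simp
  then obtain z where "poly p z = 0"
    using fundamental_theorem_of_algebra[of p] constant_degree[of p] by auto
  then have "(\<Sum>k\<le>n. z ^ (n - k) * out_markov k) = 0"
    by (simp add: p_def poly_sum poly_monom mult.commute)
  then have V0: "krylov_vec z = 0\<^sub>v (Suc n)"
    using \<open>R_injective\<close> R_mult_krylov_vec[OF nil] krylov_vec_carrier
    unfolding R_injective_def by blast
  show False
  proof (cases "z = 0")
    case True
    then show False
      using last_col_pow_n_nonzero[OF _ nil] \<open>R_injective\<close> V0 krylov_vec_zero
      unfolding R_injective_def by auto
  next
    case False
    have "(M *\<^sub>v krylov_vec z) $ n = 0"
      using V0 by (simp add: carrier_vecI)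
    then show False
      using M_mult_krylov_vec[OF nil, of n z] V0 False by simp
  qed
qed

lemma exact_delay_iff: "exact_delay \<longleftrightarrow> R_injective \<and> (\<forall>ev. eigenvalue M ev \<longrightarrow> ev = 0)"
proof
  assume exact_delay
  then show "R_injective \<and> (\<forall>ev. eigenvalue M ev \<longrightarrow> ev = 0)"
    unfolding R_injective_def
    using exact_delay_R_kernel_trivial exact_delay_eigenvalue_eq_zero by blast
next
  assume conds: "R_injective \<and> (\<forall>ev. eigenvalue M ev \<longrightarrow> ev = 0)"
  then have nil: "M ^\<^sub>m Suc n = 0\<^sub>m (Suc n) (Suc n)"
    using pow_eq_zero_if_eigenvalues_zero[OF M_carrier] by blast
  show exact_delay
    using conds out_markov_eq_zero[OF _ nil] by (intro exact_delay_if_out_markov_zero[OF nil]) blast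
qed

end

section \<open>Real systems\<close>

locale real_gmb_eso = gmb_eso n A0 B0 E0 C0 L for n and A0 B0 E0 C0 L :: "real mat"
begin

sublocale complexified: complex_gmb_eso n "map_mat complex_of_real A0" "map_mat complex_of_real B0"
    "map_mat complex_of_real E0" "map_mat complex_of_real C0" "map_mat complex_of_real L"
  using A0 B0 E0 C0 L by unfold_locales auto

lemma complexified_M: "complexified.M = map_mat complex_of_real M"
  by (rule eq_matI)
    (auto simp: complexified.M_index complexified.A_index complexified.C_def M_index A_index C_def
      carrier_matD[OF A0] carrier_matD[OF E0] carrier_matD[OF C0] carrier_matD[OF L])

lemma complexified_exact_delay: "complexified.exact_delay \<longleftrightarrow> exact_delay"
proof -
  have "complexified.M ^\<^sub>m k = map_mat complex_of_real (M ^\<^sub>m k)" for k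
    unfolding complexified_M by (simp add: of_real_hom.mat_hom_pow[OF M_carrier])
  then have "complexified.est_markov k = complex_of_real (est_markov k)" for k
    by (simp add: complexified.est_markov_def est_markov_def)
  then have "complexified.est_markov k = (if k \<le> n then 1 else 0)
      \<longleftrightarrow> est_markov k = (if k \<le> n then 1 else 0)" for k
    by (cases "k \<le> n") simp_all
  then show ?thesis
    unfolding complexified.exact_delay_def exact_delay_def by blast
qed

lemma delayed_exact_estimation_iff: "delayed_exact_estimation n A0 B0 E0 C0 L \<longleftrightarrow> exact_delay"
proof -
  have "delayed_exact_estimation n A0 B0 E0 C0 L \<longleftrightarrow>
      (\<forall>u f x Xh. trajectory u f x Xh \<longrightarrow> (\<forall>k > Suc n. Xh k $ n = f (k - Suc n)))"
    unfolding delayed_exact_estimation_def trajectory_def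
      ext_A_def ext_B_def ext_C_def A_def B_def C_def
    \<comment> \<open>normalise \<open>n + 1\<close> and \<open>k - n - 1\<close> to \<open>Suc n\<close> and \<open>k - Suc n\<close>\<close>
    by (simp only: One_nat_def add_Suc_right add_0_right diff_diff_left) blast
  then show ?thesis
    using estimate_delayed_if_exact_delay exact_delay_if_estimates_delayed by blast
qed

lemma observable_if_exact_delay:
  assumes exact_delay
  shows "observable n A0 C0"
proof -
  have obs: "obs_mat n A0 C0 \<in> carrier_mat n n"
    by (simp add: obs_mat_def)
  have obs_index: "(obs_mat n A0 C0 *\<^sub>v v) $ i = (C0 * A0 ^\<^sub>m i *\<^sub>v v) $ 0"
    if "v \<in> carrier_vec n" and "i < n" for v i
    using that C0 A0 by (simp add: obs_mat_def scalar_prod_def)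
  show ?thesis
    unfolding observable_def full_rank_iff_trivial_kernel[OF obs]
  proof (intro ballI impI)
    fix v :: "real vec"
    assume v: "v \<in> carrier_vec n" and "obs_mat n A0 C0 *\<^sub>v v = 0\<^sub>v n"
    then show "v = 0\<^sub>v n"
      using obs_index[OF v] by (intro exact_delay_unobservable_eq_zero[OF assms v]) simp
  qed
qed

end

theorem theorem1:
  fixes n :: nat and A0 B0 E0 C0 L :: "real mat"
  assumes "n \<ge> 1"
    and "A0 \<in> carrier_mat n n" and "B0 \<in> carrier_mat n 1" and "E0 \<in> carrier_mat n 1"
    and "C0 \<in> carrier_mat 1 n" and "L \<in> carrier_mat (n+1) 1"
  shows "delayed_exact_estimation n A0 B0 E0 C0 L \<longleftrightarrow>
           ((observable n A0 C0 \<and> no_invariant_zeros n A0 E0 C0) \<and>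
            (\<forall>ev::complex. eigenvalue (map_mat complex_of_real
                 (ext_A n A0 E0 - L * ext_C n C0)) ev \<longrightarrow> ev = 0))"
proof -
  interpret real_gmb_eso n A0 B0 E0 C0 L
    using assms by unfold_locales auto
  have M: "ext_A n A0 E0 - L * ext_C n C0 = M"
    by (simp add: ext_A_def ext_C_def A_def C_def M_def)
  have zeros: "no_invariant_zeros n A0 E0 C0 \<longleftrightarrow> complexified.R_injective"
    unfolding no_invariant_zeros_def complexified.R_injective_def
    using full_rank_iff_trivial_kernel[OF complexified.R_carrier]
    by (simp add: rosenbrock_def complexified.R_def)
  show ?thesis
    unfolding delayed_exact_estimation_iff M complexified_M[symmetric] zeros
    using complexified.exact_delay_iff complexified_exact_delay observable_if_exact_delay by blast
qed

end
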